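(* Let $X$ be a finite set with $|X|>1$ and let $s=s_k s_{k-1}\cdots s_1\in\mathbb F_X$ be a reduced word with $s_i\in X\cup X^{-1}$. Then for every $n\in\mathbb N$, $$P(s^{-1},n)=\bigcup_{i=0}^k B_{\frac{n-k}{2}}\, s_i\cdots s_1,$$ where for $i=0$ the product $s_i\cdots s_1$ is the empty word.
   Context: $\mathbb F_X$ is the free group on $X$ with reduced word length $|\cdot|$; for real $r$, $B_r=\{\omega\in\mathbb F_X:|\omega|\le r\}$. For $s\in\mathbb F_X$ and $n\in\mathbb N$, $P(s,n)=\{\omega\in\mathbb F_X:|\omega|+|\omega s|\le n\}$. *)

theory Defs
  imports Complex_Main
begin

text \<open>A letter is a pair (x, b): (x, False) is the generator x, (x, True) is x^{-1}.
  Elements of F_X are represented by reduced words (lists of letters, read left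
  to right), with letters from X.\<close>

type_synonym 'a letter = "'a \<times> bool"
type_synonym 'a word = "'a letter list"

definition inv_letter :: "'a letter \<Rightarrow> 'a letter" where
  "inv_letter l = (fst l, \<not> snd l)"

fun reduced :: "'a word \<Rightarrow> bool" where
  "reduced [] = True"
| "reduced [l] = True"
| "reduced (l1 # l2 # ls) = (l2 \<noteq> inv_letter l1 \<and> reduced (l2 # ls))"

fun red :: "'a word \<Rightarrow> 'a word" where
  "red [] = []"
| "red (l # ls) = (case red ls of
      [] \<Rightarrow> [l]
    | m # ms \<Rightarrow> (if m = inv_letter l then ms else l # m # ms))"

definition free_group :: "'a set \<Rightarrow> 'a word set" where
  "free_group X = {w. reduced w \<and> fst ` set w \<subseteq> X}"

definition fg_mult :: "'a word \<Rightarrow> 'a word \<Rightarrow> 'a word" where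
  "fg_mult u v = red (u @ v)"

definition fg_inv :: "'a word \<Rightarrow> 'a word" where
  "fg_inv w = rev (map inv_letter w)"

definition ball_fg :: "'a set \<Rightarrow> real \<Rightarrow> 'a word set" where
  "ball_fg X r = {w \<in> free_group X. real (length w) \<le> r}"

definition P_set :: "'a set \<Rightarrow> 'a word \<Rightarrow> nat \<Rightarrow> 'a word set" where
  "P_set X s n = {w \<in> free_group X. length w + length (fg_mult w s) \<le> n}"

definition right_translate :: "'a word set \<Rightarrow> 'a word \<Rightarrow> 'a word set" where
  "right_translate A g = (\<lambda>a. fg_mult a g) ` A"

end

theory Submission
  imports Defs
begin

text \<open>Write \<open>\<omega> = u t\<close> and \<open>s = p t\<close> with \<open>t\<close> the longest common suffix of the
  reduced words \<open>\<omega>\<close> and \<open>s\<close>. Then \<open>\<omega> s\<^sup>-\<^sup>1 = u p\<^sup>-\<^sup>1\<close> with no cancellation, so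
  \<open>|\<omega>| + |\<omega> s\<^sup>-\<^sup>1| = 2|u| + |s|\<close>, and \<open>\<omega> \<in> P(s\<^sup>-\<^sup>1, n)\<close> exactly when
  \<open>|u| \<le> (n - |s|)/2\<close>, i.e. when \<open>\<omega>\<close> lies in the ball of radius \<open>(n - |s|)/2\<close>
  translated by \<open>t\<close>. Conversely, for any \<open>u\<close> and any suffix \<open>t\<close> of \<open>s = p t\<close>,
  \<open>|u t| + |u t s\<^sup>-\<^sup>1| = |u t| + |u p\<^sup>-\<^sup>1| \<le> 2|u| + |s|\<close>.\<close>

definition cons_red :: "'a letter \<Rightarrow> 'a word \<Rightarrow> 'a word" where
  "cons_red l z = (case z of [] \<Rightarrow> [l] | m # ms \<Rightarrow> (if m = inv_letter l then ms else l # m # ms))"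

lemma red_Cons [simp]: "red (l # x) = cons_red l (red x)"
  by (simp add: cons_red_def)

declare red.simps(2) [simp del]

lemma inv_letter_inv_letter [simp]: "inv_letter (inv_letter l) = l"
  by (simp add: inv_letter_def)

lemma reduced_tl: "reduced (l # ls) \<Longrightarrow> reduced ls"
  by (cases ls) auto

lemma reduced_cons_red: "reduced z \<Longrightarrow> reduced (cons_red l z)"
  by (cases z) (auto simp: cons_red_def dest: reduced_tl)

lemma reduced_red: "reduced (red w)"
  by (induction w) (simp_all add: reduced_cons_red)

lemma red_reduced: "reduced w \<Longrightarrow> red w = w"
  by (induction w rule: reduced.induct) (auto simp: cons_red_def)

lemma cons_red_cancel: "reduced y \<Longrightarrow> cons_red l (cons_red (inv_letter l) y) = y"
  by (cases y rule: reduced.cases) (auto simp: cons_red_def)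

lemma red_append_cons_red: "red (cons_red l z @ y) = red (l # z @ y)"
proof (cases z)
  case (Cons m ms)
  show ?thesis
  proof (cases "m = inv_letter l")
    case True
    have "cons_red l z = ms"
      using True Cons by (simp add: cons_red_def)
    moreover have "red (l # z @ y) = red (ms @ y)"
      using True Cons by (simp add: cons_red_cancel reduced_red)
    ultimately show ?thesis
      by simp
  qed (use Cons in \<open>simp add: cons_red_def\<close>)
qed (simp add: cons_red_def)

lemma red_append_red_left [simp]: "red (red x @ y) = red (x @ y)"
  by (induction x) (simp_all add: red_append_cons_red)

lemma red_append_red_right [simp]: "red (x @ red y) = red (x @ y)"
  by (induction x) (simp_all add: red_reduced reduced_red)

lemma fg_inv_Cons: "fg_inv (l # t) = fg_inv t @ [inv_letter l]"
  by (simp add: fg_inv_def)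

lemma fg_inv_append: "fg_inv (p @ t) = fg_inv t @ fg_inv p"
  by (simp add: fg_inv_def)

lemma red_append_fg_inv_cancel: "red (t @ fg_inv t @ y) = red y"
proof (induction t arbitrary: y)
  case (Cons l t)
  have "red ((l # t) @ fg_inv (l # t) @ y) = cons_red l (red (t @ fg_inv t @ inv_letter l # y))"
    by (simp add: fg_inv_Cons)
  also have "\<dots> = cons_red l (cons_red (inv_letter l) (red y))"
    by (simp add: Cons.IH)
  also have "\<dots> = red y"
    by (simp add: cons_red_cancel reduced_red)
  finally show ?case .
qed (simp add: fg_inv_def)

lemma fg_mult_fg_inv_common_suffix:
  "fg_mult (fg_mult u t) (fg_inv (p @ t)) = red (u @ fg_inv p)"
proof -
  have "fg_mult (fg_mult u t) (fg_inv (p @ t)) = red (u @ t @ fg_inv t @ fg_inv p)"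
    by (simp add: fg_mult_def fg_inv_append)
  also have "\<dots> = red (u @ fg_inv p)"
    by (metis red_append_red_right red_append_fg_inv_cancel)
  finally show ?thesis .
qed

lemma length_cons_red: "length (cons_red l z) \<le> Suc (length z)"
  by (cases z) (auto simp: cons_red_def)

lemma length_red: "length (red x) \<le> length x"
  by (induction x) (auto intro: order.trans[OF length_cons_red])

lemma set_cons_red: "set (cons_red l z) \<subseteq> insert l (set z)"
  by (cases z) (auto simp: cons_red_def)

lemma set_red: "set (red x) \<subseteq> set x"
  by (induction x) (auto dest: subsetD[OF set_cons_red])

lemma reduced_appendD: "reduced (xs @ ys) \<Longrightarrow> reduced xs \<and> reduced ys"
  by (induction xs rule: reduced.induct) (auto dest: reduced_tl)

lemma reduced_appendI:
  "reduced xs \<Longrightarrow> reduced ys \<Longrightarrow> xs = [] \<or> ys = [] \<or> hd ys \<noteq> inv_letter (last xs)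
   \<Longrightarrow> reduced (xs @ ys)"
proof (induction xs rule: reduced.induct)
  case (2 l)
  then show ?case by (cases ys) auto
qed simp_all

lemma reduced_fg_inv: "reduced w \<Longrightarrow> reduced (fg_inv w)"
proof (induction w rule: reduced.induct)
  case (3 l1 l2 ls)
  have "hd [inv_letter l1] \<noteq> inv_letter (last (fg_inv (l2 # ls)))"
    using "3.prems" by (auto simp: fg_inv_def inv_letter_def prod_eq_iff)
  then show ?case
    using "3" reduced_appendI[of "fg_inv (l2 # ls)" "[inv_letter l1]"] by (simp add: fg_inv_Cons)
qed (simp_all add: fg_inv_def)

lemma fg_mult_in_free_group:
  assumes "u \<in> free_group X" "v \<in> free_group X"
  shows "fg_mult u v \<in> free_group X"
proof -
  have "fst ` set (fg_mult u v) \<subseteq> fst ` set u \<union> fst ` set v"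
    using image_mono[OF set_red[of "u @ v"], of fst] by (simp add: fg_mult_def image_Un)
  also have "\<dots> \<subseteq> X"
    using assms by (simp add: free_group_def)
  finally show ?thesis
    by (simp add: free_group_def fg_mult_def reduced_red)
qed

lemma append_in_free_groupD:
  "xs @ ys \<in> free_group X \<Longrightarrow> xs \<in> free_group X \<and> ys \<in> free_group X"
  by (auto simp: free_group_def dest: reduced_appendD)

lemma reduced_append_fg_inv:
  assumes "reduced u" "reduced p" "u = [] \<or> p = [] \<or> last u \<noteq> last p"
  shows "reduced (u @ fg_inv p)"
proof (rule reduced_appendI)
  show "reduced (fg_inv p)"
    using assms(2) by (rule reduced_fg_inv)
  show "u = [] \<or> fg_inv p = [] \<or> hd (fg_inv p) \<noteq> inv_letter (last u)"
    using assms(3) by (auto simp: fg_inv_def hd_rev last_map inv_letter_def prod_eq_iff)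
qed (fact assms(1))

lemma obtain_longest_common_suffix:
  obtains u p t where "w = u @ t" "s = p @ t" "u = [] \<or> p = [] \<or> last u \<noteq> last p"
proof (induction w arbitrary: s thesis rule: rev_induct)
  case (snoc a w)
  show ?case
  proof (cases s rule: rev_exhaust)
    case (snoc s' b)
    show ?thesis
    proof (cases "a = b")
      case True
      obtain u p t where "w = u @ t" "s' = p @ t" "u = [] \<or> p = [] \<or> last u \<noteq> last p"
        using snoc.IH by blast
      then show ?thesis
        using snoc.prems[of u "t @ [a]" p] \<open>s = s' @ [b]\<close> True by simp
    next
      case False
      then show ?thesis
        using snoc.prems[of "w @ [a]" "[]" s] \<open>s = s' @ [b]\<close> by simp
    qed
  qed (use snoc.prems[of "w @ [a]" "[]" s] in simp)
qed simp

lemma length_fg_mult_fg_inv_longest_common_suffix: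
  assumes "reduced (u @ t)" "reduced (p @ t)" "u = [] \<or> p = [] \<or> last u \<noteq> last p"
  shows "length (u @ t) + length (fg_mult (u @ t) (fg_inv (p @ t))) = 2 * length u + length (p @ t)"
proof -
  have "fg_mult u t = u @ t"
    using assms(1) by (simp add: fg_mult_def red_reduced)
  then have "fg_mult (u @ t) (fg_inv (p @ t)) = red (u @ fg_inv p)"
    by (metis fg_mult_fg_inv_common_suffix)
  also have "\<dots> = u @ fg_inv p"
  proof (rule red_reduced, rule reduced_append_fg_inv)
    show "reduced u" "reduced p"
      using assms(1,2) reduced_appendD by blast+
  qed (fact assms(3))
  finally show ?thesis
    by (simp add: fg_inv_def)
qed

lemma length_fg_mult_fg_inv_le:
  "length (fg_mult u t) + length (fg_mult (fg_mult u t) (fg_inv (p @ t))) \<le> 2 * length u + length (p @ t)"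
  using length_red[of "u @ t"] length_red[of "u @ fg_inv p"]
  by (simp add: fg_mult_fg_inv_common_suffix) (simp add: fg_mult_def fg_inv_def)

lemma drop_image_eq_suffixes: "(\<lambda>i. drop (length s - i) s) ` {0..length s} = {t. \<exists>p. s = p @ t}"
proof (intro equalityI subsetI)
  fix t assume "t \<in> {t. \<exists>p. s = p @ t}"
  then obtain p where "s = p @ t" by blast
  then show "t \<in> (\<lambda>i. drop (length s - i) s) ` {0..length s}"
    by (intro image_eqI[of _ _ "length t"]) auto
next
  fix t assume "t \<in> (\<lambda>i. drop (length s - i) s) ` {0..length s}"
  then obtain i where "t = drop (length s - i) s"
    by blast
  then have "s = take (length s - i) s @ t"
    by simp
  then show "t \<in> {t. \<exists>p. s = p @ t}"
    by blast
qed

lemma P_set_fg_inv_elim: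
  assumes "s \<in> free_group X" and "w \<in> P_set X (fg_inv s) n"
  obtains u p t where "s = p @ t" "u \<in> free_group X" "2 * length u + length s \<le> n"
    "w = fg_mult u t"
proof -
  have w: "w \<in> free_group X" and len: "length w + length (fg_mult w (fg_inv s)) \<le> n"
    using assms(2) by (simp_all add: P_set_def)
  obtain u p t where wut: "w = u @ t" and s: "s = p @ t"
    and no_cancel: "u = [] \<or> p = [] \<or> last u \<noteq> last p"
    by (rule obtain_longest_common_suffix)
  have "2 * length u + length s \<le> n"
    using len w assms(1) length_fg_mult_fg_inv_longest_common_suffix[OF _ _ no_cancel] wut s
    by (simp add: free_group_def)
  moreover have "u \<in> free_group X"
    using w wut append_in_free_groupD by blast
  moreover have "w = fg_mult u t"
    using w wut by (simp add: fg_mult_def red_reduced free_group_def)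
  ultimately show ?thesis
    using s that by blast
qed

lemma fg_mult_suffix_in_P_set_fg_inv:
  assumes "s = p @ t" "s \<in> free_group X" "u \<in> free_group X" "2 * length u + length s \<le> n"
  shows "fg_mult u t \<in> P_set X (fg_inv s) n"
proof -
  have "t \<in> free_group X"
    using assms(1,2) append_in_free_groupD by blast
  then have "fg_mult u t \<in> free_group X"
    using assms(3) fg_mult_in_free_group by blast
  moreover have "length (fg_mult u t) + length (fg_mult (fg_mult u t) (fg_inv s)) \<le> n"
    using length_fg_mult_fg_inv_le[of u t p] assms(1,4) by simp
  ultimately show ?thesis
    by (simp add: P_set_def)
qed

theorem lemma3p4:
  fixes X :: "'a set" and s :: "'a word" and n :: nat
  assumes "finite X" and "card X > 1"
    and "s \<in> free_group X"
  shows "P_set X (fg_inv s) n =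
    (\<Union>i \<in> {0..length s}.
       right_translate (ball_fg X ((real n - real (length s)) / 2)) (drop (length s - i) s))"
proof -
  let ?B = "ball_fg X ((real n - real (length s)) / 2)"
  have in_ball: "u \<in> ?B \<longleftrightarrow> u \<in> free_group X \<and> 2 * length u + length s \<le> n" for u
    by (auto simp: ball_fg_def)
  have "P_set X (fg_inv s) n = (\<Union>t \<in> {t. \<exists>p. s = p @ t}. right_translate ?B t)"
  proof (intro equalityI subsetI)
    fix w assume "w \<in> P_set X (fg_inv s) n"
    then obtain u p t where "s = p @ t" "u \<in> ?B" "w = fg_mult u t"
      using assms(3) in_ball by (blast elim: P_set_fg_inv_elim)
    then show "w \<in> (\<Union>t \<in> {t. \<exists>p. s = p @ t}. right_translate ?B t)"
      by (auto simp: right_translate_def)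
  next
    fix w assume "w \<in> (\<Union>t \<in> {t. \<exists>p. s = p @ t}. right_translate ?B t)"
    then obtain u p t where "s = p @ t" "u \<in> ?B" "w = fg_mult u t"
      by (auto simp: right_translate_def)
    then show "w \<in> P_set X (fg_inv s) n"
      using assms(3) in_ball fg_mult_suffix_in_P_set_fg_inv by blast
  qed
  also have "\<dots> = (\<Union>i \<in> {0..length s}. right_translate ?B (drop (length s - i) s))"
    by (simp add: drop_image_eq_suffixes[symmetric] image_image)
  finally show ?thesis .
qed

end
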